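(* Let $f\ge1$ and $k\ge 3$ be integers and consider the asynchronous Bullshark protocol with $n=kf+1$ validators as described in the context. If a validator $p_i$ directly commits a steady-state leader in wave $w$, then no honest validator commits (directly or indirectly) a fallback leader in wave $w$; and symmetrically, if a validator $p_i$ directly commits a fallback leader in wave $w$, then no honest validator commits (directly or indirectly) a steady-state leader in wave $w$.
   Context: Setting: $n=kf+1$ validators, at most $f$ Byzantine. All local DAGs are subsets of one common set of vertices; each vertex has a round and a source validator, and for each validator and round there is at most one vertex (no equivocation). Each validator $p_i$ keeps a local DAG $DAG_i$ closed under edges; $DAG_i[r]$ is its set of round-$r$ vertices; a path is a sequence of contiguous edges. Waves have 4 rounds, $\mathit{round}(w,j)=4(w-1)+j$. Each wave $w$ has a first steady-state leader vertex in $\mathit{round}(w,1)$, a second steady-state leader vertex in $\mathit{round}(w,3)$ (both predetermined) and a fallback leader vertex in $\mathit{round}(w,1)$ (selected by a shared coin at the end of the wave). Voting types: for each wave $w$, each validator $p_j$ whose $\mathit{round}(w,1)$ vertex exists has a voting type in $w$, either steady-state or fallback, which is a deterministic function of that vertex and its causal history; hence every validator that has $p_j$'s $\mathit{round}(w,1)$ vertex in its DAG assigns $p_j$ the same type for $w$, and all of $p_j$'s vertices in wave $w$ carry that type. A vertex votes for a leader if it has a path to it; steady-state leaders of rounds $\mathit{round}(w,1)$ and $\mathit{round}(w,3)$ are voted on by vertices of rounds $\mathit{round}(w,2)$ and $\mathit{round}(w,4)$ respectively, and the fallback leader by vertices of $\mathit{round}(w,4)$. Direct commit: $p_i$ directly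 commits a leader of wave $w$ if at least $(k-1)f+1$ vertices of the corresponding voting round in $DAG_i$ have a path to it and have the leader's type (steady-state for steady-state leaders, fallback for the fallback leader). Indirect commit: when traversing back from a directly committed vertex, a validator computes, for a candidate leader, the votes as the vertices of its voting round that are reachable from the committed vertex and have a path to the candidate; it commits a leader only if that leader has at least $(k-2)f+1$ votes of its own type while the leader of the other type has at most $f$ votes of that other type. *)

theory Defs
  imports Main
begin

definition wround :: "nat \<Rightarrow> nat \<Rightarrow> nat" where
  "wround w j = 4 * (w - 1) + j"

text \<open>The three leaders of a wave: first steady-state, second steady-state, fallback.\<close>
datatype lkind = SS1 | SS2 | FB

definition is_steady :: "lkind \<Rightarrow> bool" where
  "is_steady K = (K \<noteq> FB)"

fun leader_round :: "lkind \<Rightarrow> nat \<Rightarrow> nat" where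
  "leader_round SS1 w = wround w 1"
| "leader_round SS2 w = wround w 3"
| "leader_round FB w = wround w 1"

fun vote_round :: "lkind \<Rightarrow> nat \<Rightarrow> nat" where
  "vote_round SS1 w = wround w 2"
| "vote_round SS2 w = wround w 4"
| "vote_round FB w = wround w 4"

text \<open>Parameters used below:
  rnd :: vertex => round, src :: vertex => source validator,
  E v u : v has an edge to u, DAG i : local DAG of validator i,
  stype w j : validator j has steady-state voting type in wave w (False = fallback),
  ldr K w : the leader vertex of kind K in wave w.
  A path is a nonempty sequence of contiguous edges, i.e. the transitive closure of E.\<close>

definition direct_votes ::
  "('x \<Rightarrow> nat) \<Rightarrow> ('x \<Rightarrow> nat) \<Rightarrow> ('x \<Rightarrow> 'x \<Rightarrow> bool) \<Rightarrow> 'x set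
   \<Rightarrow> (nat \<Rightarrow> nat \<Rightarrow> bool) \<Rightarrow> (lkind \<Rightarrow> nat \<Rightarrow> 'x) \<Rightarrow> lkind \<Rightarrow> nat \<Rightarrow> 'x set" where
  "direct_votes rnd src E D stype ldr K w =
     {v \<in> D. rnd v = vote_round K w \<and> E\<^sup>+\<^sup>+ v (ldr K w)
            \<and> stype w (src v) = is_steady K}"

definition direct_commit ::
  "nat \<Rightarrow> nat \<Rightarrow> ('x \<Rightarrow> nat) \<Rightarrow> ('x \<Rightarrow> nat) \<Rightarrow> ('x \<Rightarrow> 'x \<Rightarrow> bool) \<Rightarrow> 'x set
   \<Rightarrow> (nat \<Rightarrow> nat \<Rightarrow> bool) \<Rightarrow> (lkind \<Rightarrow> nat \<Rightarrow> 'x) \<Rightarrow> lkind \<Rightarrow> nat \<Rightarrow> bool" where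
  "direct_commit k f rnd src E D stype ldr K w =
     (card (direct_votes rnd src E D stype ldr K w) \<ge> (k - 1) * f + 1)"

definition anchored_votes ::
  "('x \<Rightarrow> nat) \<Rightarrow> ('x \<Rightarrow> nat) \<Rightarrow> ('x \<Rightarrow> 'x \<Rightarrow> bool) \<Rightarrow> 'x set
   \<Rightarrow> (nat \<Rightarrow> nat \<Rightarrow> bool) \<Rightarrow> (lkind \<Rightarrow> nat \<Rightarrow> 'x) \<Rightarrow> 'x \<Rightarrow> lkind \<Rightarrow> nat \<Rightarrow> 'x set" where
  "anchored_votes rnd src E D stype ldr a K w =
     {v \<in> D. rnd v = vote_round K w \<and> E\<^sup>+\<^sup>+ a v \<and> E\<^sup>+\<^sup>+ v (ldr K w)
            \<and> stype w (src v) = is_steady K}"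

definition indirect_cond ::
  "nat \<Rightarrow> nat \<Rightarrow> ('x \<Rightarrow> nat) \<Rightarrow> ('x \<Rightarrow> nat) \<Rightarrow> ('x \<Rightarrow> 'x \<Rightarrow> bool) \<Rightarrow> 'x set
   \<Rightarrow> (nat \<Rightarrow> nat \<Rightarrow> bool) \<Rightarrow> (lkind \<Rightarrow> nat \<Rightarrow> 'x) \<Rightarrow> 'x \<Rightarrow> lkind \<Rightarrow> nat \<Rightarrow> bool" where
  "indirect_cond k f rnd src E D stype ldr a K w =
     (card (anchored_votes rnd src E D stype ldr a K w) \<ge> (k - 2) * f + 1 \<and>
      (\<forall>K'. is_steady K' \<noteq> is_steady K \<longrightarrow>
            card (anchored_votes rnd src E D stype ldr a K' w) \<le> f))"

inductive committed ::
  "nat \<Rightarrow> nat \<Rightarrow> ('x \<Rightarrow> nat) \<Rightarrow> ('x \<Rightarrow> nat) \<Rightarrow> ('x \<Rightarrow> 'x \<Rightarrow> bool) \<Rightarrow> 'x set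
   \<Rightarrow> (nat \<Rightarrow> nat \<Rightarrow> bool) \<Rightarrow> (lkind \<Rightarrow> nat \<Rightarrow> 'x) \<Rightarrow> lkind \<Rightarrow> nat \<Rightarrow> bool"
  for k f rnd src E D stype ldr where
  direct: "w \<ge> 1 \<Longrightarrow> direct_commit k f rnd src E D stype ldr K w
           \<Longrightarrow> committed k f rnd src E D stype ldr K w"
| indirect: "committed k f rnd src E D stype ldr K' w' \<Longrightarrow> w \<ge> 1
           \<Longrightarrow> leader_round K w < leader_round K' w'
           \<Longrightarrow> indirect_cond k f rnd src E D stype ldr (ldr K' w') K w
           \<Longrightarrow> committed k f rnd src E D stype ldr K w"

end

theory Submission
  imports Defs
begin

text \<open>A direct commit of a leader of one type gives \<open>(k - 1) f + 1\<close> votes of that type, and any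
  commit of a leader of the other type, direct or indirect, rests on at least \<open>(k - 2) f + 1\<close>
  votes of the other type. Voting types are fixed per validator and wave, and without
  equivocation a validator has at most one vertex per round, so the two vote sets come from
  disjoint sets of validators and together have at most \<open>n = k f + 1\<close> elements. But
  \<open>(k - 1) f + 1 + (k - 2) f + 1 = k f + 1 + (k - 3) f + 1 > n\<close>.\<close>

lemma card_add_le_of_disjoint_sources:
  assumes "inj_on src A" "inj_on src B" "src ` A \<inter> src ` B = {}"
    and "src ` (A \<union> B) \<subseteq> {..<n}"
  shows "card A + card B \<le> n"
proof -
  have fin: "finite (src ` A)" "finite (src ` B)"
    using assms(4) by (auto intro: finite_subset)
  have "card A + card B = card (src ` A) + card (src ` B)"
    using assms(1,2) by (simp add: card_image)
  also have "\<dots> = card (src ` A \<union> src ` B)"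
    using fin assms(3) by (simp add: card_Un_disjoint)
  also have "\<dots> \<le> card {..<n}"
    using assms(4) by (intro card_mono) auto
  finally show ?thesis by simp
qed

lemma inj_on_src_same_round:
  assumes "\<forall>u\<in>V. \<forall>v\<in>V. rnd u = rnd v \<and> src u = src v \<longrightarrow> u = v"
    and "A \<subseteq> V" "\<forall>v\<in>A. rnd v = r"
  shows "inj_on src A"
  using assms unfolding inj_on_def by (metis subsetD)

lemma committed_imp_typed_votes:
  assumes "committed k f rnd src E D stype ldr K w"
  obtains A where "A \<subseteq> D" "card A \<ge> (k - 2) * f + 1"
    "\<forall>v\<in>A. rnd v = vote_round K w \<and> stype w (src v) = is_steady K"
  using assms
proof cases
  case direct
  let ?A = "direct_votes rnd src E D stype ldr K w"
  have "(k - 2) * f \<le> (k - 1) * f" by (intro mult_le_mono1) auto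
  moreover have "card ?A \<ge> (k - 1) * f + 1"
    using direct unfolding direct_commit_def by simp
  ultimately have "card ?A \<ge> (k - 2) * f + 1" by linarith
  then show ?thesis
    by (rule that[rotated]) (auto simp: direct_votes_def)
next
  case (indirect K' w')
  let ?A = "anchored_votes rnd src E D stype ldr (ldr K' w') K w"
  have "card ?A \<ge> (k - 2) * f + 1"
    using indirect unfolding indirect_cond_def by simp
  then show ?thesis
    by (rule that[rotated]) (auto simp: anchored_votes_def)
qed

lemma quorum_sum_gt:
  fixes k f :: nat
  assumes "f \<ge> 1" "k \<ge> 3"
  shows "k * f + 1 < (k - 1) * f + 1 + ((k - 2) * f + 1)"
proof -
  obtain m where "k = m + 3" using assms(2) by (metis add.commute le_Suc_ex)
  then show ?thesis using assms(1) by (simp add: algebra_simps)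
qed

lemma direct_commit_excludes_opposite_commit:
  assumes "f \<ge> 1" "k \<ge> 3"
    and src_range: "\<forall>v\<in>V. src v < k * f + 1"
    and no_equiv: "\<forall>u\<in>V. \<forall>v\<in>V. rnd u = rnd v \<and> src u = src v \<longrightarrow> u = v"
    and "D \<subseteq> V" "D' \<subseteq> V"
    and dc: "direct_commit k f rnd src E D stype ldr K w"
    and opposite: "is_steady K' \<noteq> is_steady K"
  shows "\<not> committed k f rnd src E D' stype ldr K' w"
proof
  assume "committed k f rnd src E D' stype ldr K' w"
  then obtain B where B: "B \<subseteq> D'" "card B \<ge> (k - 2) * f + 1"
    "\<forall>v\<in>B. rnd v = vote_round K' w \<and> stype w (src v) = is_steady K'"
    by (rule committed_imp_typed_votes)
  define A where "A = direct_votes rnd src E D stype ldr K w"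
  have A: "A \<subseteq> D" "card A \<ge> (k - 1) * f + 1"
    "\<forall>v\<in>A. rnd v = vote_round K w \<and> stype w (src v) = is_steady K"
    using dc unfolding A_def direct_votes_def direct_commit_def by auto
  have "card A + card B \<le> k * f + 1"
  proof (rule card_add_le_of_disjoint_sources)
    show "inj_on src A" "inj_on src B"
      using A B \<open>D \<subseteq> V\<close> \<open>D' \<subseteq> V\<close>
      by (auto intro!: inj_on_src_same_round[OF no_equiv])
    show "src ` A \<inter> src ` B = {}"
      using A(3) B(3) opposite by force
    show "src ` (A \<union> B) \<subseteq> {..<k * f + 1}"
      using A(1) B(1) \<open>D \<subseteq> V\<close> \<open>D' \<subseteq> V\<close> src_range by auto
  qed
  then show False
    using quorum_sum_gt[OF assms(1,2)] A(2) B(2) by linarith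
qed

theorem claim1:
  fixes f k n :: nat
    and V :: "'x set"
    and rnd src :: "'x \<Rightarrow> nat"
    and E :: "'x \<Rightarrow> 'x \<Rightarrow> bool"
    and DAG :: "nat \<Rightarrow> 'x set"
    and stype :: "nat \<Rightarrow> nat \<Rightarrow> bool"
    and ldr :: "lkind \<Rightarrow> nat \<Rightarrow> 'x"
    and honest :: "nat \<Rightarrow> bool"
    and i w :: nat
  assumes hf: "f \<ge> 1" and hk: "k \<ge> 3" and hn: "n = k * f + 1"
    and byz: "card {j. j < n \<and> \<not> honest j} \<le> f"
    and src_range: "\<forall>v\<in>V. src v < n"
    and no_equiv: "\<forall>u\<in>V. \<forall>v\<in>V. rnd u = rnd v \<and> src u = src v \<longrightarrow> u = v"
    and dag_sub: "\<forall>j<n. DAG j \<subseteq> V"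
    and dag_closed: "\<forall>j<n. \<forall>v u. v \<in> DAG j \<and> E v u \<longrightarrow> u \<in> DAG j"
    and ldr_round: "\<forall>K w'. w' \<ge> 1 \<longrightarrow> rnd (ldr K w') = leader_round K w'"
    and hi: "i < n" and hw: "w \<ge> 1"
  shows "((direct_commit k f rnd src E (DAG i) stype ldr SS1 w \<or>
           direct_commit k f rnd src E (DAG i) stype ldr SS2 w) \<longrightarrow>
          (\<forall>j<n. honest j \<longrightarrow> \<not> committed k f rnd src E (DAG j) stype ldr FB w))
       \<and> (direct_commit k f rnd src E (DAG i) stype ldr FB w \<longrightarrow>
          (\<forall>j<n. honest j \<longrightarrow>
             \<not> committed k f rnd src E (DAG j) stype ldr SS1 w \<and>
             \<not> committed k f rnd src E (DAG j) stype ldr SS2 w))"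
proof -
  have excl: "\<not> committed k f rnd src E (DAG j) stype ldr K' w"
    if "direct_commit k f rnd src E (DAG i) stype ldr K w"
      and "is_steady K' \<noteq> is_steady K" and "j < n" for K K' j
    using direct_commit_excludes_opposite_commit[OF hf hk _ no_equiv, where D = "DAG i" and D' = "DAG j"]
      that src_range dag_sub hi hn by simp
  show ?thesis
    by (auto simp: is_steady_def dest: excl)
qed

end
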